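(* Let $p \geq 6$ and $q_1, q_2 \geq 3$ be integers and let $L$ be the Laplacian of the graph $C_{q_1} \oplus K_p \oplus C_{q_2}$. Let $E_K$ be the span of the vectors $e_{-1}-e_{-k}$, $k=2,\ldots,p-2$ (equivalently, vectors supported on $\{-p+2,\ldots,-1\}$ with entries summing to $0$), and $E_K^\perp$ its orthogonal complement. For $\lambda>4$ let $\sigma_+ = \tfrac12[(2-\lambda)+\sqrt{(2-\lambda)^2-4}]$, and for an integer $q$ let $$Q_q = \sigma_+\frac{1+\sigma_+^{2q-3}}{1+\sigma_+^{2q-1}} - (p-\lambda), \qquad D_{q_1,p,q_2}(\lambda) = (p-2)(2 - Q_{q_1} - Q_{q_2}) - (2-\lambda)(Q_{q_1}Q_{q_2} - 1).$$ Then $\lambda > 4$ is an eigenvalue of $L$ with a corresponding eigenvector $v \in E_K^\perp$ if and only if $D_{q_1,p,q_2}(\lambda) = 0$. The equation $D_{q_1,p,q_2}(\lambda)=0$ has exactly two solutions in $(p,p+2]$ and no solutions in $(4,p] \cup (p+2,+\infty)$. In the case $q_1 = q_2 = q$ one has the factorization $D_{q,p,q}(\lambda) = F_{A,q}(\lambda)\,F_{S,q}(\lambda)$ with $$F_{S,q}(\lambda) = (2-\lambda)(Q_q+1) + 2(p-2), \qquad F_{A,q}(\lambda) = 1 - Q_q;$$ the eigenvectors in $E_K^\perp$ corresponding to solutions $\lambda>4$ of $F_{S,q}(\lambda)=0$ are symmetric, and those corresponding to solutions $\lambda>4$ of $F_{A,q}(\lambda)=0$ are antisymmetric. Furthermore,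 each of the equations $F_{A,q}(\lambda)=0$, $F_{S,q}(\lambda)=0$ ($q\geq 3$) has exactly one solution in $(p,p+2)$ and no solutions in $(4,p] \cup [p+2,+\infty)$.
   Context: For integers $p \geq 3$, $q_1,q_2 \geq 2$, the graph $C_{q_1} \oplus K_p \oplus C_{q_2}$ has vertex set $\{-q_1-p+2,\ldots,-p\} \cup \{-p+1,\ldots,0\} \cup \{1,\ldots,q_2-1\}$. Its edges are: every pair of distinct vertices in $\{-p+1,\ldots,0\}$, the edges $\{-p,-p+1\}$ and $\{0,1\}$, the edges $\{j,j+1\}$ for $-q_1-p+2 \leq j \leq -p-1$, and the edges $\{j,j+1\}$ for $1 \leq j \leq q_2-2$. The Laplacian $L$ is the matrix with $L_{ii}$ equal to the degree of $i$, $L_{ij}=-1$ if $i\neq j$ are adjacent and $0$ otherwise. Vectors are real functions on the vertex set with the standard inner product; $e_j$ is the indicator vector of $j$. When $q_1=q_2=q$, a vector $v$ is symmetric if $v_{-p+1-n} = v_n$ for all $n \in \{0,\ldots,q-1\}$ and antisymmetric if $v_{-p+1-n} = -v_n$ for all $n \in \{0,\ldots,q-1\}$ (invariance, resp. anti-invariance, under the reflection $j \mapsto -p+1-j$). *)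

theory Defs
  imports Complex_Main
begin

text \<open>The graph C_q1 + K_p + C_q2 on the integer vertex set
  {-q1-p+2 .. q2-1}; vectors are functions int => real vanishing outside it.\<close>

definition verts :: "nat \<Rightarrow> nat \<Rightarrow> nat \<Rightarrow> int set" where
  "verts p q1 q2 = {- int q1 - int p + 2 .. int q2 - 1}"

definition adj :: "nat \<Rightarrow> nat \<Rightarrow> nat \<Rightarrow> int \<Rightarrow> int \<Rightarrow> bool" where
  "adj p q1 q2 i j \<longleftrightarrow>
     i \<in> verts p q1 q2 \<and> j \<in> verts p q1 q2 \<and> i \<noteq> j \<and>
     ((i \<in> {- int p + 1 .. 0} \<and> j \<in> {- int p + 1 .. 0})
      \<or> {i, j} = {- int p, - int p + 1}
      \<or> {i, j} = {0, 1}
      \<or> (\<exists>k. - int q1 - int p + 2 \<le> k \<and> k \<le> - int p - 1 \<and> {i, j} = {k, k + 1})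
      \<or> (\<exists>k. 1 \<le> k \<and> k \<le> int q2 - 2 \<and> {i, j} = {k, k + 1}))"

definition degree :: "nat \<Rightarrow> nat \<Rightarrow> nat \<Rightarrow> int \<Rightarrow> nat" where
  "degree p q1 q2 i = card {j \<in> verts p q1 q2. adj p q1 q2 i j}"

definition lap :: "nat \<Rightarrow> nat \<Rightarrow> nat \<Rightarrow> int \<Rightarrow> int \<Rightarrow> real" where
  "lap p q1 q2 i j =
     (if i = j then real (degree p q1 q2 i) else if adj p q1 q2 i j then -1 else 0)"

definition lap_apply :: "nat \<Rightarrow> nat \<Rightarrow> nat \<Rightarrow> (int \<Rightarrow> real) \<Rightarrow> int \<Rightarrow> real" where
  "lap_apply p q1 q2 v i = (\<Sum>j\<in>verts p q1 q2. lap p q1 q2 i j * v j)"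

definition is_vec :: "nat \<Rightarrow> nat \<Rightarrow> nat \<Rightarrow> (int \<Rightarrow> real) \<Rightarrow> bool" where
  "is_vec p q1 q2 v \<longleftrightarrow> (\<forall>i. i \<notin> verts p q1 q2 \<longrightarrow> v i = 0)"

definition vinner :: "nat \<Rightarrow> nat \<Rightarrow> nat \<Rightarrow> (int \<Rightarrow> real) \<Rightarrow> (int \<Rightarrow> real) \<Rightarrow> real" where
  "vinner p q1 q2 v w = (\<Sum>i\<in>verts p q1 q2. v i * w i)"

definition EK :: "nat \<Rightarrow> nat \<Rightarrow> nat \<Rightarrow> (int \<Rightarrow> real) set" where
  "EK p q1 q2 = {w. is_vec p q1 q2 w \<and> (\<forall>i. i \<notin> {- int p + 2 .. -1} \<longrightarrow> w i = 0)
                   \<and> (\<Sum>i\<in>{- int p + 2 .. -1}. w i) = 0}"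

definition EK_perp :: "nat \<Rightarrow> nat \<Rightarrow> nat \<Rightarrow> (int \<Rightarrow> real) set" where
  "EK_perp p q1 q2 = {v. is_vec p q1 q2 v \<and> (\<forall>w\<in>EK p q1 q2. vinner p q1 q2 v w = 0)}"

definition eigvec_EKperp :: "nat \<Rightarrow> nat \<Rightarrow> nat \<Rightarrow> real \<Rightarrow> (int \<Rightarrow> real) \<Rightarrow> bool" where
  "eigvec_EKperp p q1 q2 lam v \<longleftrightarrow>
     is_vec p q1 q2 v \<and> v \<noteq> (\<lambda>_. 0) \<and> v \<in> EK_perp p q1 q2 \<and>
     (\<forall>i\<in>verts p q1 q2. lap_apply p q1 q2 v i = lam * v i)"

definition sigma_plus :: "real \<Rightarrow> real" where
  "sigma_plus lam = ((2 - lam) + sqrt ((2 - lam)^2 - 4)) / 2"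

definition Qf :: "nat \<Rightarrow> nat \<Rightarrow> real \<Rightarrow> real" where
  "Qf p q lam = sigma_plus lam * (1 + sigma_plus lam ^ (2*q - 3)) / (1 + sigma_plus lam ^ (2*q - 1))
                - (real p - lam)"

definition Dfun :: "nat \<Rightarrow> nat \<Rightarrow> nat \<Rightarrow> real \<Rightarrow> real" where
  "Dfun q1 p q2 lam = (real p - 2) * (2 - Qf p q1 lam - Qf p q2 lam)
                      - (2 - lam) * (Qf p q1 lam * Qf p q2 lam - 1)"

definition FS :: "nat \<Rightarrow> nat \<Rightarrow> real \<Rightarrow> real" where
  "FS p q lam = (2 - lam) * (Qf p q lam + 1) + 2 * (real p - 2)"

definition FA :: "nat \<Rightarrow> nat \<Rightarrow> real \<Rightarrow> real" where
  "FA p q lam = 1 - Qf p q lam"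

definition symmetric_vec :: "nat \<Rightarrow> nat \<Rightarrow> (int \<Rightarrow> real) \<Rightarrow> bool" where
  "symmetric_vec p q v \<longleftrightarrow> (\<forall>n\<in>{0 .. int q - 1}. v (- int p + 1 - n) = v n)"

definition antisymmetric_vec :: "nat \<Rightarrow> nat \<Rightarrow> (int \<Rightarrow> real) \<Rightarrow> bool" where
  "antisymmetric_vec p q v \<longleftrightarrow> (\<forall>n\<in>{0 .. int q - 1}. v (- int p + 1 - n) = - v n)"

end

theory Submission
  imports Defs
begin

(* Let lam > 4 and t = 2 - lam. An eigenvector v in E_K^perp is constant, say c, on the clique
   vertices -p+2..-1, and along each tail it solves the recurrence of path_poly t read from the
   leaf; the tail enters the junction vertices only through the continued fraction path_ratio,
   whose closed form in sigma_plus is the one in Qf. So v is determined by a = v(-p+1),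
   b = v 0 and c, and the eigen-equations at -1, -p+1 and 0 form a linear system in (a, b, c)
   with determinant Dfun: eigenvalues are exactly the zeros of Dfun.
   FA = 1 - Qf is strictly decreasing in lam and changes sign once in (p+1, p+2), and
   Dfun = (p - lam)(FA1 + FA2) + (lam - 2) FA1 FA2. Signs exclude zeros outside (p, p+2], and
   between sign changes a zero solves 1/FA1 + 1/FA2 = (lam - 2)/(lam - p), where the left side
   increases and the right side decreases. For q1 = q2 the system splits into
   FA (a - b) = 0 and FS (a + b) = 0, giving the factorisation and the (anti)symmetry. *)

lemma strict_mono_on_inverse:
  fixes f :: "real \<Rightarrow> real"
  assumes "strict_antimono_on S f" and "(\<forall>x\<in>S. 0 < f x) \<or> (\<forall>x\<in>S. f x < 0)"
  shows "strict_mono_on S (\<lambda>x. inverse (f x))"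
proof (rule monotone_onI)
  fix x y assume "x \<in> S" "y \<in> S" "x < y"
  then have "f y < f x" using assms(1) by (auto dest: monotone_onD)
  then show "inverse (f x) < inverse (f y)"
    using assms(2) \<open>x \<in> S\<close> \<open>y \<in> S\<close> less_imp_inverse_less less_imp_inverse_less_neg by blast
qed

(* On S a zero solves inverse (f x) + inverse (g x) = (x - 2) / (x - p), whose left side
   increases and whose right side decreases. *)
lemma secular_zero_unique:
  fixes f g :: "real \<Rightarrow> real" and p :: real
  assumes "2 < p" "S \<subseteq> {p<..}"
    and "strict_antimono_on S f" "(\<forall>x\<in>S. 0 < f x) \<or> (\<forall>x\<in>S. f x < 0)"
    and "strict_antimono_on S g" "(\<forall>x\<in>S. 0 < g x) \<or> (\<forall>x\<in>S. g x < 0)"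
    and "x \<in> S" "(p - x) * (f x + g x) + (x - 2) * (f x * g x) = 0"
    and "y \<in> S" "(p - y) * (f y + g y) + (y - 2) * (f y * g y) = 0"
  shows "x = y"
proof -
  define \<psi> where "\<psi> x = inverse (f x) + inverse (g x) - (x - 2) / (x - p)" for x
  have zero: "\<psi> z = 0" if "z \<in> S" "(p - z) * (f z + g z) + (z - 2) * (f z * g z) = 0" for z
  proof -
    have "f z \<noteq> 0" "g z \<noteq> 0" "z - p \<noteq> 0" using assms(2,4,6) that(1) by auto
    then show ?thesis using that(2) unfolding \<psi>_def by (simp add: field_simps)
  qed
  have "strict_mono_on S \<psi>"
  proof (rule monotone_onI)
    fix u w assume uw: "u \<in> S" "w \<in> S" "u < w"
    have "inverse (f u) < inverse (f w)" "inverse (g u) < inverse (g w)"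
      using strict_mono_on_inverse[OF assms(3,4)] strict_mono_on_inverse[OF assms(5,6)] uw
      by (auto dest: monotone_onD)
    moreover have "(w - 2) / (w - p) < (u - 2) / (u - p)"
    proof -
      have "p < u" using uw assms(2) by auto
      have "(u - 2) * (w - p) - (w - 2) * (u - p) = (p - 2) * (w - u)" by (simp add: algebra_simps)
      moreover have "0 < (p - 2) * (w - u)" using uw(3) assms(1) by simp
      ultimately have "(w - 2) * (u - p) < (u - 2) * (w - p)" by linarith
      then show ?thesis using \<open>p < u\<close> uw(3) by (simp add: divide_simps)
    qed
    ultimately show "\<psi> u < \<psi> w" unfolding \<psi>_def by linarith
  qed
  then show ?thesis
    using strict_mono_on_imp_inj_on zero[of x] zero[of y] assms(7-10) by (metis inj_onD)
qed

lemma zero_between_sign_change: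
  fixes G :: "real \<Rightarrow> real"
  assumes "continuous_on {a..b} G" "a \<le> b" "G a * G b < 0"
  obtains z where "a < z" "z < b" "G z = 0"
proof -
  have "G a < 0 \<and> 0 < G b \<or> 0 < G a \<and> G b < 0" using assms(3) by (auto simp: mult_less_0_iff)
  then obtain z where "a \<le> z" "z \<le> b" "G z = 0"
    using IVT'[of G a 0 b] IVT2'[of G b 0 a] assms(1,2) by force
  moreover have "z \<noteq> a" "z \<noteq> b" using assms(3) \<open>G z = 0\<close> by auto
  ultimately show ?thesis using that by force
qed

lemma strict_antimono_on_zero_sign:
  fixes f :: "real \<Rightarrow> real"
  assumes "strict_antimono_on A f" "f r = 0" "r \<in> A" "x \<in> A"
  shows "x < r \<Longrightarrow> 0 < f x" and "r < x \<Longrightarrow> f x < 0"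
  using monotone_onD[OF assms(1)] assms(2-4) by fastforce+

lemma secular_two_zeros:
  fixes f g :: "real \<Rightarrow> real" and p r s :: real
  assumes p: "2 < p"
    and cont: "continuous_on {p..p+2} f" "continuous_on {p..p+2} g"
    and anti: "strict_antimono_on {p..p+2} f" "strict_antimono_on {p..p+2} g"
    and zero: "f r = 0" "g s = 0" and rs: "p < r" "r < s" "s < p + 2"
  shows "card {x. p < x \<and> x \<le> p + 2 \<and> (p - x) * (f x + g x) + (x - 2) * (f x * g x) = 0} = 2"
proof -
  define G where "G x = (p - x) * (f x + g x) + (x - 2) * (f x * g x)" for x
  have rs_in: "r \<in> {p..p+2}" "s \<in> {p..p+2}" using rs by auto
  note f_sign = strict_antimono_on_zero_sign[OF anti(1) zero(1) rs_in(1)]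
  note g_sign = strict_antimono_on_zero_sign[OF anti(2) zero(2) rs_in(2)]
  have cont_G: "continuous_on {a..b} G" if "p \<le> a" "b \<le> p + 2" for a b
    unfolding G_def by (intro continuous_intros continuous_on_subset[OF cont(1)]
        continuous_on_subset[OF cont(2)]) (use that in auto)
  have "0 < G p" unfolding G_def using f_sign(1)[of p] g_sign(1)[of p] rs p by simp
  moreover have "G r < 0" unfolding G_def using zero(1) g_sign(1)[of r] rs by (simp add: mult_neg_pos)
  moreover have "0 < G s" unfolding G_def using zero(2) f_sign(2)[of s] rs by (simp add: mult_neg_neg)
  ultimately have "G p * G r < 0" "G r * G s < 0" by (simp_all add: mult_pos_neg mult_neg_pos)
  obtain z1 where z1: "p < z1" "z1 < r" "G z1 = 0"
    by (rule zero_between_sign_change[of p r G]) (use cont_G rs \<open>G p * G r < 0\<close> in auto)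
  obtain z2 where z2: "r < z2" "z2 < s" "G z2 = 0"
    by (rule zero_between_sign_change[of r s G]) (use cont_G rs \<open>G r * G s < 0\<close> in auto)
  have unique: "x = y" if "a \<le> b" "{a<..<b} \<subseteq> {p<..<p+2}"
      "(\<forall>x\<in>{a<..<b}. 0 < f x) \<or> (\<forall>x\<in>{a<..<b}. f x < 0)"
      "(\<forall>x\<in>{a<..<b}. 0 < g x) \<or> (\<forall>x\<in>{a<..<b}. g x < 0)"
      "x \<in> {a<..<b}" "y \<in> {a<..<b}" "G x = 0" "G y = 0" for a b x y
    using secular_zero_unique[OF p _ monotone_on_subset[OF anti(1)] that(3)
        monotone_on_subset[OF anti(2)] that(4)] that(2,5-8) unfolding G_def by force
  have sub: "{p<..<r} \<subseteq> {p<..<p+2}" "{r<..<s} \<subseteq> {p<..<p+2}" using rs by auto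
  have "{x. p < x \<and> x \<le> p + 2 \<and> G x = 0} = {z1, z2}"
  proof (intro equalityI subsetI)
    fix x assume x: "x \<in> {x. p < x \<and> x \<le> p + 2 \<and> G x = 0}"
    consider "x < r" | "r < x" "x < s" | "s < x" | "x = r \<or> x = s" by linarith
    then show "x \<in> {z1, z2}"
    proof cases
      case 1
      then show ?thesis using unique[OF _ sub(1), of x z1] x z1 f_sign(1) g_sign(1) rs by auto
    next
      case 2
      then show ?thesis using unique[OF _ sub(2), of x z2] x z2 f_sign(2) g_sign(1) rs by auto
    next
      case 3
      then have "0 < G x" unfolding G_def using f_sign(2)[of x] g_sign(2)[of x] x rs p
        by (intro add_pos_pos mult_pos_pos mult_neg_neg) auto
      then show ?thesis using x by simp
    qed (use x \<open>G r < 0\<close> \<open>0 < G s\<close> in auto)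
  qed (use z1 z2 rs in auto)
  moreover have "z1 \<noteq> z2" using z1 z2 by simp
  ultimately show ?thesis unfolding G_def by simp
qed

lemma secular_sym_zero:
  fixes f :: "real \<Rightarrow> real" and p r :: real
  assumes p: "2 < p" and cont: "continuous_on {p..p+2} f" and anti: "strict_antimono_on {p..p+2} f"
    and zero: "f r = 0" and r: "p < r" "r < p + 2"
  obtains z where "p < z" "z < r" "2 * (p - z) + (z - 2) * f z = 0"
    "\<And>x. p < x \<Longrightarrow> x \<le> p + 2 \<Longrightarrow> 2 * (p - x) + (x - 2) * f x = 0 \<Longrightarrow> x = z"
proof -
  define g where "g x = 2 * (p - x) + (x - 2) * f x" for x
  have "r \<in> {p..p+2}" using r by auto
  note f_sign = strict_antimono_on_zero_sign[OF anti zero this]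
  have f_pos: "0 < f x" if "p \<le> x" "x < r" for x using f_sign(1)[of x] that r by simp
  have f_nonpos: "f x \<le> 0" if "r \<le> x" "x \<le> p + 2" for x
    using f_sign(2)[of x] that zero r by (cases "x = r") auto
  have cont_g: "continuous_on {p..r} g"
    unfolding g_def by (intro continuous_intros continuous_on_subset[OF cont]) (use r in auto)
  have "g p * g r < 0"
    unfolding g_def using f_pos[of p] zero r p by (simp add: mult_pos_neg)
  obtain z where z: "p < z" "z < r" "g z = 0"
    by (rule zero_between_sign_change[of p r g]) (use cont_g r \<open>g p * g r < 0\<close> in auto)
  have "x = z" if x: "p < x" "x \<le> p + 2" "g x = 0" for x
  proof (cases "x < r")
    case True
    have "{p<..<r} \<subseteq> {p..p+2}" "{p<..<r} \<subseteq> {p<..}" using r by auto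
    moreover have "(p - y) * (f y + f y) + (y - 2) * (f y * f y) = f y * g y" for y
      unfolding g_def by (simp add: algebra_simps)
    moreover have "\<forall>y\<in>{p<..<r}. 0 < f y" using f_pos by simp
    ultimately show ?thesis
      using secular_zero_unique[of p "{p<..<r}" f f x z] monotone_on_subset[OF anti] p x z True
      by simp
  next
    case False
    then have "g x < 0" unfolding g_def using f_nonpos[of x] x p
      by (intro add_neg_nonpos mult_nonneg_nonpos) auto
    then show ?thesis using x by simp
  qed
  then show ?thesis using that z unfolding g_def by blast
qed

(* Values along a pendant path, from its leaf, of a solution of L v = lam v with t = 2 - lam. *)
fun path_poly :: "real \<Rightarrow> nat \<Rightarrow> real" where
  "path_poly t 0 = 1"
| "path_poly t (Suc 0) = t - 1"
| "path_poly t (Suc (Suc n)) = t * path_poly t (Suc n) - path_poly t n"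

fun path_ratio :: "real \<Rightarrow> nat \<Rightarrow> real" where
  "path_ratio t 0 = 1"
| "path_ratio t (Suc n) = 1 / (t - path_ratio t n)"

lemma path_ratio_bounds:
  assumes "t < -2"
  shows "-1 \<le> path_ratio t n \<and> path_ratio t n \<le> 1"
proof (induction n)
  case (Suc n)
  then have "t - path_ratio t n < -1" using assms by linarith
  then show ?case by (simp add: divide_simps)
qed simp

lemma path_ratio_Suc_bounds:
  assumes "t < -2"
  shows "-1 < path_ratio t (Suc n) \<and> path_ratio t (Suc n) < 0"
proof -
  have "t - path_ratio t n < -1" using path_ratio_bounds[OF assms, of n] assms by linarith
  then show ?thesis by (simp add: divide_simps)
qed

lemma path_ratio_strict_antimono:
  assumes "t1 < t2" "t2 < -2"
  shows "path_ratio t2 (Suc n) < path_ratio t1 (Suc n)"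
proof (induction n)
  case 0
  then show ?case using assms by (simp add: divide_simps)
next
  case (Suc n)
  have "t1 - path_ratio t1 (Suc n) < t2 - path_ratio t2 (Suc n)" using Suc assms by linarith
  moreover have "t2 - path_ratio t2 (Suc n) < 0"
    using path_ratio_Suc_bounds[of t2 n] assms by linarith
  ultimately show ?case by (simp add: divide_simps)
qed

lemma path_ratio_Suc_less:
  assumes "t < -2"
  shows "path_ratio t (Suc n) < path_ratio t n"
proof (induction n)
  case 0
  then show ?case using path_ratio_Suc_bounds[OF assms, of 0] by simp
next
  case (Suc n)
  have "t - path_ratio t n < t - path_ratio t (Suc n)" using Suc by linarith
  moreover have "t - path_ratio t (Suc n) < 0"
    using path_ratio_Suc_bounds[OF assms, of n] assms by linarith
  ultimately have "1 / (t - path_ratio t (Suc n)) < 1 / (t - path_ratio t n)"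
    by (simp add: divide_simps del: path_ratio.simps)
  then show ?case by simp
qed

lemma path_ratio_strict_decreasing:
  assumes "t < -2" "m < n"
  shows "path_ratio t n < path_ratio t m"
  using assms(2)
proof (induction n)
  case (Suc n)
  then show ?case using path_ratio_Suc_less[OF assms(1), of n] by (metis less_SucE less_trans)
qed simp

lemma continuous_on_path_ratio: "continuous_on {..< -2} (\<lambda>t. path_ratio t n)"
proof (induction n)
  case (Suc n)
  have "t - path_ratio t n \<noteq> 0" if "t < -2" for t
    using path_ratio_bounds[OF that, of n] that by linarith
  then show ?case by (auto intro!: continuous_intros Suc.IH)
qed simp

lemma path_poly_eq_ratio:
  assumes "t < -2"
  shows "path_poly t n = path_ratio t (Suc n) * path_poly t (Suc n)"
proof (induction n rule: nat_less_induct)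
  case (1 n)
  show ?case
  proof (cases n)
    case (Suc m)
    have "t - path_ratio t (Suc m) \<noteq> 0"
      using path_ratio_Suc_bounds[OF assms, of m] assms by linarith
    moreover have "path_poly t (Suc (Suc m)) = (t - path_ratio t (Suc m)) * path_poly t (Suc m)"
      using 1 Suc by (simp add: algebra_simps)
    ultimately show ?thesis using Suc by simp
  qed (use assms in simp)
qed

lemma path_poly_nonzero:
  assumes "t < -2"
  shows "path_poly t n \<noteq> 0"
proof (induction n)
  case (Suc n)
  then show ?case using path_poly_eq_ratio[OF assms, of n] assms by auto
qed simp

(* At j = 0 the truncated subtraction j - 1 = 0 turns the recurrence into the leaf equation
   f 1 = (t - 1) f 0. *)
lemma path_recurrence_iff:
  fixes f :: "nat \<Rightarrow> real"
  shows "(\<forall>j. j + 1 \<le> m \<longrightarrow> f (j + 1) = t * f j - f (j - 1)) \<longleftrightarrow> (\<forall>j\<le>m. f j = f 0 * path_poly t j)"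
proof
  assume rec: "\<forall>j. j + 1 \<le> m \<longrightarrow> f (j + 1) = t * f j - f (j - 1)"
  show "\<forall>j\<le>m. f j = f 0 * path_poly t j"
  proof (intro allI impI)
    fix j show "j \<le> m \<Longrightarrow> f j = f 0 * path_poly t j"
    proof (induction j rule: nat_less_induct)
      case (1 j)
      consider "j = 0" | "j = 1" | k where "j = k + 2"
        by (cases j; cases "j - 1") auto
      then show ?case
      proof cases
        case 2
        then show ?thesis using rec[rule_format, of 0] 1(2) by (simp add: algebra_simps)
      next
        case (3 k)
        then have "f (k + 2) = t * f (k + 1) - f k" using rec[rule_format, of "k + 1"] 1(2) by simp
        moreover have "f (k + 1) = f 0 * path_poly t (k + 1)" "f k = f 0 * path_poly t k"
          using 1(1)[rule_format, of "k + 1"] 1(1)[rule_format, of k] 1(2) 3 by simp_all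
        ultimately show ?thesis using 3 by (simp add: algebra_simps)
      qed simp
    qed
  qed
next
  assume closed: "\<forall>j\<le>m. f j = f 0 * path_poly t j"
  show "\<forall>j. j + 1 \<le> m \<longrightarrow> f (j + 1) = t * f j - f (j - 1)"
  proof (intro allI impI)
    fix j assume "j + 1 \<le> m"
    then show "f (j + 1) = t * f j - f (j - 1)"
      using closed[rule_format, of "j + 1"] closed[rule_format, of j] closed[rule_format, of "j - 1"]
      by (cases j) (simp_all add: algebra_simps)
  qed
qed

lemma sigma_plus_bounds_and_add_inverse:
  assumes "4 < lam"
  shows "-1 < sigma_plus lam \<and> sigma_plus lam < 0 \<and> sigma_plus lam + 1 / sigma_plus lam = 2 - lam"
proof -
  define t where "t = 2 - lam"
  define r where "r = sqrt (t\<^sup>2 - 4)"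
  have t: "t < -2" using assms t_def by simp
  have "2 * 2 < (-t) * (-t)" using t by (intro mult_strict_mono) auto
  then have r0: "0 \<le> r" and r2: "r\<^sup>2 = t\<^sup>2 - 4" unfolding r_def by (simp_all add: power2_eq_square)
  have "r\<^sup>2 < (-t)\<^sup>2" using r2 by simp
  then have "r < -t" by (rule power2_less_imp_less) (use t in linarith)
  moreover have "(-2 - t)\<^sup>2 < r\<^sup>2" using r2 t by (simp add: power2_eq_square algebra_simps)
  then have "-2 - t < r" using r0 by (rule power2_less_imp_less)
  ultimately have s: "-1 < (t + r) / 2" "(t + r) / 2 < 0" by auto
  have "(t + r) * (t + r) + 4 = t * (2 * (t + r))"
    using r2 by (simp add: power2_eq_square algebra_simps)
  then have "(t + r) / 2 + 1 / ((t + r) / 2) = t"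
    using s by (simp add: field_simps)
  moreover have "sigma_plus lam = (t + r) / 2" by (simp add: sigma_plus_def t_def r_def)
  ultimately show ?thesis unfolding t_def[symmetric] using s by (simp only:)
qed

lemma path_ratio_closed_form:
  fixes s :: real
  assumes "s \<noteq> 0" "\<bar>s\<bar> < 1"
  shows "path_ratio (s + 1 / s) n = (s ^ (2 * n) + s) / (s ^ (2 * n + 1) + 1)"
proof (induction n)
  case (Suc n)
  have nz: "s ^ Suc k + 1 \<noteq> 0" for k
  proof -
    have "\<bar>s\<bar> ^ Suc k < 1" using assms by (intro power_Suc_less_one) auto
    then have "\<bar>s ^ Suc k\<bar> < 1" by (simp only: power_abs)
    then show ?thesis by linarith
  qed
  have d: "s ^ (2 * n + 1) + 1 \<noteq> 0" "s ^ (2 * n + 3) + 1 \<noteq> 0"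
    using nz[of "2 * n"] nz[of "2 * n + 2"] by (simp_all add: numeral_eq_Suc)
  have "s + 1 / s - (s ^ (2 * n) + s) / (s ^ (2 * n + 1) + 1)
      = (s ^ (2 * n + 3) + 1) / (s * (s ^ (2 * n + 1) + 1))"
    using d(1) assms(1)
    by (simp add: field_simps power_add) (simp add: algebra_simps power_add numeral_eq_Suc)
  then have "path_ratio (s + 1 / s) (Suc n) = s * (s ^ (2 * n + 1) + 1) / (s ^ (2 * n + 3) + 1)"
    using Suc by simp
  then show ?case by (simp add: algebra_simps power_add numeral_eq_Suc)
qed (use assms in simp)

lemma Qf_eq_path_ratio:
  assumes "4 < lam" "2 \<le> q"
  shows "Qf p q lam = path_ratio (2 - lam) (q - 1) + lam - real p"
proof -
  define s where "s = sigma_plus lam"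
  have s: "-1 < s" "s < 0" "s + 1 / s = 2 - lam"
    using sigma_plus_bounds_and_add_inverse[OF assms(1)] s_def by auto
  obtain m where m: "q = m + 2" using le_add_diff_inverse2[OF assms(2)] by metis
  have "path_ratio (2 - lam) (q - 1) = (s ^ (2 * (q - 1)) + s) / (s ^ (2 * (q - 1) + 1) + 1)"
    using path_ratio_closed_form[of s "q - 1"] s by simp
  also have "\<dots> = s * (1 + s ^ (2 * q - 3)) / (1 + s ^ (2 * q - 1))"
    using m by (simp add: algebra_simps numeral_eq_Suc)
  finally show ?thesis unfolding Qf_def s_def by simp
qed

lemma FA_eq_path_ratio:
  assumes "4 < lam" "2 \<le> q"
  shows "FA p q lam = 1 + real p - lam - path_ratio (2 - lam) (q - 1)"
  using Qf_eq_path_ratio[OF assms] unfolding FA_def by simp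

lemma FA_strict_antimono:
  assumes "4 < x" "x < y" "2 \<le> q"
  shows "FA p q y < FA p q x"
proof -
  have "q - 1 = Suc (q - 2)" using assms(3) by arith
  then have "path_ratio (2 - x) (q - 1) < path_ratio (2 - y) (q - 1)"
    using path_ratio_strict_antimono[of "2 - y" "2 - x" "q - 2"] assms by simp
  then show ?thesis using FA_eq_path_ratio[of x q p] FA_eq_path_ratio[of y q p] assms by simp
qed

lemma path_ratio_tail_bounds:
  assumes "4 < lam" "2 \<le> q"
  shows "-1 < path_ratio (2 - lam) (q - 1) \<and> path_ratio (2 - lam) (q - 1) < 0"
proof -
  have "q - 1 = Suc (q - 2)" using assms(2) by arith
  then show ?thesis using path_ratio_Suc_bounds[of "2 - lam" "q - 2"] assms(1) by simp
qed

lemma FA_pos: "4 < x \<Longrightarrow> x \<le> real p + 1 \<Longrightarrow> 2 \<le> q \<Longrightarrow> 0 < FA p q x"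
  using FA_eq_path_ratio[of x q p] path_ratio_tail_bounds[of x q] by simp

lemma FA_neg: "4 < x \<Longrightarrow> real p + 2 \<le> x \<Longrightarrow> 2 \<le> q \<Longrightarrow> FA p q x < 0"
  using FA_eq_path_ratio[of x q p] path_ratio_tail_bounds[of x q] by simp

lemma continuous_on_FA:
  assumes "2 \<le> q"
  shows "continuous_on {4<..} (FA p q)"
proof -
  have "continuous_on {4<..} (\<lambda>x. path_ratio (2 - x) (q - 1))"
    by (rule continuous_on_compose2[OF continuous_on_path_ratio]) (auto intro!: continuous_intros)
  then have "continuous_on {4<..} (\<lambda>x. 1 + real p - x - path_ratio (2 - x) (q - 1))"
    by (intro continuous_intros)
  then show ?thesis
    by (rule continuous_on_cong[THEN iffD1, rotated 2]) (use FA_eq_path_ratio assms in auto)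
qed

lemma FA_neq_FA:
  assumes "4 < x" "2 \<le> q1" "2 \<le> q2" "q1 \<noteq> q2"
  shows "FA p q1 x \<noteq> FA p q2 x"
proof -
  have "path_ratio (2 - x) (q1 - 1) \<noteq> path_ratio (2 - x) (q2 - 1)"
  proof (cases "q1 < q2")
    case True
    then have "q1 - 1 < q2 - 1" using assms(2) by arith
    then show ?thesis using path_ratio_strict_decreasing[of "2 - x" "q1 - 1" "q2 - 1"] assms(1) by simp
  next
    case False
    then have "q2 - 1 < q1 - 1" using assms(3,4) by arith
    then show ?thesis using path_ratio_strict_decreasing[of "2 - x" "q2 - 1" "q1 - 1"] assms(1) by simp
  qed
  then show ?thesis using FA_eq_path_ratio[of x q1 p] FA_eq_path_ratio[of x q2 p] assms by simp
qed

lemma Dfun_eq_FA: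
  "Dfun q1 p q2 lam = (real p - lam) * (FA p q1 lam + FA p q2 lam) + (lam - 2) * (FA p q1 lam * FA p q2 lam)"
  unfolding Dfun_def FA_def by (simp add: algebra_simps)

lemma FS_eq_FA: "FS p q lam = 2 * (real p - lam) + (lam - 2) * FA p q lam"
  unfolding FS_def FA_def by (simp add: algebra_simps)

lemma Dfun_eq_FA_mult_FS: "Dfun q p q lam = FA p q lam * FS p q lam"
  unfolding Dfun_def FA_def FS_def by (simp add: algebra_simps)

lemma FA_zero_exists:
  assumes "2 \<le> q" "3 < p"
  obtains r where "real p + 1 < r" "r < real p + 2" "FA p q r = 0"
proof -
  have "continuous_on {real p + 1 .. real p + 2} (FA p q)"
    by (rule continuous_on_subset[OF continuous_on_FA[OF assms(1)]]) (use assms(2) in auto)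
  moreover have "FA p q (real p + 1) * FA p q (real p + 2) < 0"
    using FA_pos[of "real p + 1" p q] FA_neg[of "real p + 2" p q] assms by (simp add: mult_pos_neg)
  ultimately show ?thesis
    by (elim zero_between_sign_change) (use that in auto)
qed

lemma FA_strict_antimono_on:
  assumes "2 \<le> q" "4 < p"
  shows "strict_antimono_on {real p .. real p + 2} (FA p q)"
  by (rule monotone_onI) (use FA_strict_antimono[of _ _ q p] assms in auto)

lemma continuous_on_FA_interval:
  assumes "2 \<le> q" "4 < p"
  shows "continuous_on {real p .. real p + 2} (FA p q)"
  by (rule continuous_on_subset[OF continuous_on_FA[OF assms(1)]]) (use assms(2) in auto)

lemma FA_zero_unique:
  assumes "2 \<le> q" "4 < x" "4 < y" "FA p q x = 0" "FA p q y = 0"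
  shows "x = y"
  using FA_strict_antimono[of x y q p] FA_strict_antimono[of y x q p] assms
  by (cases x y rule: linorder_cases) auto

lemma FA_unique_zero:
  assumes "2 \<le> q" "3 < p"
  shows "\<exists>!lam. real p < lam \<and> lam < real p + 2 \<and> FA p q lam = 0"
proof -
  obtain r where r: "real p + 1 < r" "r < real p + 2" "FA p q r = 0"
    using FA_zero_exists[OF assms] .
  moreover have "4 < r" using r(1) assms(2) by linarith
  ultimately show ?thesis
    using FA_zero_unique[OF assms(1)] assms(2) by (intro ex1I[of _ r]) auto
qed

lemma FA_nonzero_outside:
  assumes "2 \<le> q" "2 < p" "(4 < lam \<and> lam \<le> real p) \<or> real p + 2 \<le> lam"
  shows "FA p q lam \<noteq> 0"
proof -
  have "3 \<le> real p" using assms(2) by simp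
  then have "4 < lam" using assms(3) by linarith
  then show ?thesis using FA_pos[of lam p q] FA_neg[of lam p q] assms(1,3) by fastforce
qed

lemma FS_nonzero_outside:
  assumes "2 \<le> q" "2 < p" "(4 < lam \<and> lam \<le> real p) \<or> real p + 2 \<le> lam"
  shows "FS p q lam \<noteq> 0"
  using assms(3)
proof
  assume lam: "4 < lam \<and> lam \<le> real p"
  then have "0 < (lam - 2) * FA p q lam" using FA_pos[of lam p q] assms(1) by simp
  moreover have "0 \<le> 2 * (real p - lam)" using lam by simp
  ultimately have "0 < FS p q lam" unfolding FS_eq_FA by (simp add: add_nonneg_pos)
  then show ?thesis by simp
next
  assume lam: "real p + 2 \<le> lam"
  have "3 \<le> real p" using assms(2) by simp
  then have "(lam - 2) * FA p q lam < 0"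
    using FA_neg[of lam p q] assms(1) lam by (intro mult_pos_neg) auto
  moreover have "2 * (real p - lam) < 0" using lam by simp
  ultimately have "FS p q lam < 0" unfolding FS_eq_FA by (simp add: add_neg_neg)
  then show ?thesis by simp
qed

lemma FS_nonzero_if_FA_zero:
  assumes "4 < lam" "2 \<le> q" "FA p q lam = 0"
  shows "FS p q lam \<noteq> 0"
proof
  assume "FS p q lam = 0"
  then have "lam = real p" using assms(3) unfolding FS_eq_FA by simp
  then show False using FA_pos[of lam p q] assms by simp
qed

lemma Dfun_pos_outside:
  assumes "2 \<le> q1" "2 \<le> q2" "2 \<le> p" "(4 < lam \<and> lam \<le> real p) \<or> real p + 2 < lam"
  shows "0 < Dfun q1 p q2 lam"
  using assms(4)
proof
  assume lam: "4 < lam \<and> lam \<le> real p"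
  then have "0 < FA p q1 lam" "0 < FA p q2 lam" using FA_pos assms(1,2) by auto
  then show ?thesis unfolding Dfun_eq_FA using lam
    by (intro add_nonneg_pos mult_nonneg_nonneg mult_pos_pos) auto
next
  assume lam: "real p + 2 < lam"
  moreover have "4 < lam" using lam assms(3) by (simp add: of_nat_le_iff[symmetric])
  ultimately have "FA p q1 lam < 0" "FA p q2 lam < 0" using FA_neg assms(1,2) by auto
  then show ?thesis unfolding Dfun_eq_FA using lam
    by (intro add_pos_pos mult_pos_pos mult_neg_neg) auto
qed

lemma FS_zero_below_FA_zero:
  assumes "2 \<le> q" "4 < p" "FA p q r = 0" "real p < r" "r < real p + 2"
  obtains z where "real p < z" "z < r" "FS p q z = 0"
    "\<And>x. real p < x \<Longrightarrow> x \<le> real p + 2 \<Longrightarrow> FS p q x = 0 \<Longrightarrow> x = z"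
proof -
  have "2 < real p" using assms(2) by simp
  with secular_sym_zero[OF _ continuous_on_FA_interval[OF assms(1,2)]
        FA_strict_antimono_on[OF assms(1,2)] assms(3)] assms(4,5)
  show ?thesis using that unfolding FS_eq_FA by blast
qed

lemma FS_unique_zero:
  assumes "2 \<le> q" "4 < p"
  shows "\<exists>!lam. real p < lam \<and> lam < real p + 2 \<and> FS p q lam = 0"
proof -
  obtain r where r: "real p + 1 < r" "r < real p + 2" "FA p q r = 0"
    using FA_zero_exists[of q p] assms by auto
  have "real p < r" using r(1) by linarith
  obtain z where z: "real p < z" "z < r" "FS p q z = 0"
      and unique: "\<And>x. real p < x \<Longrightarrow> x \<le> real p + 2 \<Longrightarrow> FS p q x = 0 \<Longrightarrow> x = z"
    using FS_zero_below_FA_zero[OF assms r(3) \<open>real p < r\<close> r(2)] by blast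
  show ?thesis
  proof (rule ex1I[of _ z])
    show "real p < z \<and> z < real p + 2 \<and> FS p q z = 0" using z r(2) by simp
  qed (use unique in simp)
qed

lemma Dfun_commute: "Dfun q1 p q2 lam = Dfun q2 p q1 lam"
  unfolding Dfun_def by (simp add: algebra_simps)

lemma card_Dfun_zeros_equal_tails:
  assumes "2 \<le> q" "4 < p"
  shows "card {lam. real p < lam \<and> lam \<le> real p + 2 \<and> Dfun q p q lam = 0} = 2"
proof -
  obtain r where r: "real p + 1 < r" "r < real p + 2" "FA p q r = 0"
    using FA_zero_exists[of q p] assms by auto
  have "real p < r" "4 < real p" using r(1) assms(2) by simp_all
  obtain z where z: "real p < z" "z < r" "FS p q z = 0"
      "\<And>x. real p < x \<Longrightarrow> x \<le> real p + 2 \<Longrightarrow> FS p q x = 0 \<Longrightarrow> x = z"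
    using FS_zero_below_FA_zero[OF assms r(3) \<open>real p < r\<close> r(2)] by blast
  have "{lam. real p < lam \<and> lam \<le> real p + 2 \<and> Dfun q p q lam = 0} = {r, z}"
  proof (intro equalityI subsetI)
    fix x assume "x \<in> {lam. real p < lam \<and> lam \<le> real p + 2 \<and> Dfun q p q lam = 0}"
    then have x: "real p < x" "x \<le> real p + 2" "FA p q x = 0 \<or> FS p q x = 0"
      by (simp_all add: Dfun_eq_FA_mult_FS)
    have "4 < x" "4 < r" using x(1) r(1) \<open>4 < real p\<close> by linarith+
    then show "x \<in> {r, z}" using x FA_zero_unique[OF assms(1) _ _ _ r(3)] z(4)[of x] by blast
  qed (use r z(1-3) \<open>real p < r\<close> in \<open>auto simp: Dfun_eq_FA_mult_FS\<close>)
  then show ?thesis using z(2) by simp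
qed

lemma card_Dfun_zeros_ordered:
  assumes "2 \<le> q1" "2 \<le> q2" "4 < p" "FA p q1 r1 = 0" "FA p q2 r2 = 0"
    and "real p < r1" "r1 < r2" "r2 < real p + 2"
  shows "card {lam. real p < lam \<and> lam \<le> real p + 2 \<and> Dfun q1 p q2 lam = 0} = 2"
  unfolding Dfun_eq_FA
proof (rule secular_two_zeros)
  show "2 < real p" using assms(3) by simp
qed (use assms continuous_on_FA_interval FA_strict_antimono_on in simp_all)

lemma card_Dfun_zeros:
  assumes "2 \<le> q1" "2 \<le> q2" "4 < p"
  shows "card {lam. real p < lam \<and> lam \<le> real p + 2 \<and> Dfun q1 p q2 lam = 0} = 2"
proof (cases "q1 = q2")
  case True
  then show ?thesis using card_Dfun_zeros_equal_tails assms by simp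
next
  case False
  obtain r1 where r1: "real p + 1 < r1" "r1 < real p + 2" "FA p q1 r1 = 0"
    using FA_zero_exists[of q1 p] assms by auto
  obtain r2 where r2: "real p + 1 < r2" "r2 < real p + 2" "FA p q2 r2 = 0"
    using FA_zero_exists[of q2 p] assms by auto
  have "r1 \<noteq> r2" using FA_neq_FA[of r1 q1 q2 p] False r1 r2 assms by auto
  then consider "r1 < r2" | "r2 < r1" by linarith
  then show ?thesis
  proof cases
    case 1
    then show ?thesis using card_Dfun_zeros_ordered[of q1 q2 p r1 r2] assms r1 r2 by simp
  next
    case 2
    then show ?thesis
      using card_Dfun_zeros_ordered[of q2 q1 p r2 r1] assms r1 r2 by (simp add: Dfun_commute)
  qed
qed

lemma adj_iff:
  "adj p q1 q2 i j \<longleftrightarrow> i \<in> verts p q1 q2 \<and> j \<in> verts p q1 q2 \<and> i \<noteq> j \<and>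
     ((i \<in> {- int p + 1 .. 0} \<and> j \<in> {- int p + 1 .. 0}) \<or> \<bar>i - j\<bar> = 1)"
proof
  assume "adj p q1 q2 i j"
  then show "i \<in> verts p q1 q2 \<and> j \<in> verts p q1 q2 \<and> i \<noteq> j \<and>
     ((i \<in> {- int p + 1 .. 0} \<and> j \<in> {- int p + 1 .. 0}) \<or> \<bar>i - j\<bar> = 1)"
    unfolding adj_def by (auto simp: doubleton_eq_iff)
next
  assume h: "i \<in> verts p q1 q2 \<and> j \<in> verts p q1 q2 \<and> i \<noteq> j \<and>
     ((i \<in> {- int p + 1 .. 0} \<and> j \<in> {- int p + 1 .. 0}) \<or> \<bar>i - j\<bar> = 1)"
  show "adj p q1 q2 i j"
  proof (cases "i \<in> {- int p + 1 .. 0} \<and> j \<in> {- int p + 1 .. 0}")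
    case False
    define k where "k = min i j"
    have ij: "{i, j} = {k, k + 1}" using False h k_def by (auto simp: min_def abs_if)
    then have "k \<in> {i, j}" "k + 1 \<in> {i, j}" by blast+
    then have kV: "k \<in> verts p q1 q2" "k + 1 \<in> verts p q1 q2" using h by auto
    have "k \<le> - int p \<or> 0 \<le> k" using False h k_def by (auto simp: min_def abs_if)
    then consider "k = - int p" | "k = 0" | "k \<le> - int p - 1" | "1 \<le> k" by linarith
    then show ?thesis
    proof cases
      case 3
      have "- int q1 - int p + 2 \<le> k" using kV by (simp add: verts_def)
      then show ?thesis using h ij 3 unfolding adj_def by blast
    next
      case 4
      have "k \<le> int q2 - 2" using kV by (simp add: verts_def)
      then show ?thesis using h ij 4 unfolding adj_def by blast
    qed (use h ij adj_def in auto)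
  qed (use h adj_def in blast)
qed

definition mirror :: "nat \<Rightarrow> int \<Rightarrow> int" where
  "mirror p i = - int p + 1 - i"

lemma mirror_mirror [simp]: "mirror p (mirror p i) = i"
  by (simp add: mirror_def)

lemma mirror_in_verts_iff [simp]: "mirror p i \<in> verts p q2 q1 \<longleftrightarrow> i \<in> verts p q1 q2"
  by (auto simp: mirror_def verts_def)

lemma adj_mirror [simp]: "adj p q2 q1 (mirror p i) (mirror p j) \<longleftrightarrow> adj p q1 q2 i j"
  unfolding adj_iff mirror_in_verts_iff by (auto simp: mirror_def abs_minus_commute)

lemma verts_mirror: "verts p q2 q1 = mirror p ` verts p q1 q2"
  by (rule set_eqI) (metis image_iff mirror_in_verts_iff mirror_mirror)

lemma inj_mirror: "inj (mirror p)"
  by (metis injI mirror_mirror)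

lemma degree_mirror: "degree p q2 q1 (mirror p i) = degree p q1 q2 i"
proof -
  have "{j \<in> verts p q2 q1. adj p q2 q1 (mirror p i) j} = mirror p ` {j \<in> verts p q1 q2. adj p q1 q2 i j}"
  proof (intro equalityI subsetI)
    fix j assume "j \<in> {j \<in> verts p q2 q1. adj p q2 q1 (mirror p i) j}"
    then have "mirror p j \<in> {j \<in> verts p q1 q2. adj p q1 q2 i j}"
      using adj_mirror[of p q2 q1 i "mirror p j"] mirror_in_verts_iff[of p "mirror p j" q2 q1] by simp
    then show "j \<in> mirror p ` {j \<in> verts p q1 q2. adj p q1 q2 i j}"
      by (rule image_eqI[rotated]) simp
  qed auto
  then show ?thesis
    unfolding degree_def by (simp add: card_image inj_on_subset[OF inj_mirror])
qed

lemma lap_mirror: "lap p q2 q1 (mirror p i) (mirror p j) = lap p q1 q2 i j"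
  unfolding lap_def degree_mirror adj_mirror inj_eq[OF inj_mirror] ..

lemma lap_apply_mirror:
  "lap_apply p q2 q1 (\<lambda>k. v (mirror p k)) (mirror p i) = lap_apply p q1 q2 v i"
proof -
  have "lap_apply p q2 q1 (\<lambda>k. v (mirror p k)) (mirror p i)
      = (\<Sum>j\<in>verts p q1 q2. lap p q2 q1 (mirror p i) (mirror p j) * v (mirror p (mirror p j)))"
    unfolding lap_apply_def verts_mirror[of p q2 q1]
    by (rule sum.reindex[OF inj_on_subset[OF inj_mirror subset_UNIV], unfolded comp_def])
  then show ?thesis unfolding lap_mirror mirror_mirror lap_apply_def .
qed

lemma lap_apply_eq_neighbour_sum:
  assumes "i \<in> verts p q1 q2"
  shows "lap_apply p q1 q2 v i = (\<Sum>j\<in>{j \<in> verts p q1 q2. adj p q1 q2 i j}. v i - v j)"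
proof -
  let ?V = "verts p q1 q2" and ?N = "{j \<in> verts p q1 q2. adj p q1 q2 i j}"
  have fin: "finite ?V" by (simp add: verts_def)
  have "lap_apply p q1 q2 v i = lap p q1 q2 i i * v i + (\<Sum>j\<in>?V - {i}. lap p q1 q2 i j * v j)"
    unfolding lap_apply_def using assms fin by (simp add: sum.remove)
  also have "(\<Sum>j\<in>?V - {i}. lap p q1 q2 i j * v j) = (\<Sum>j\<in>?V - {i}. if adj p q1 q2 i j then - v j else 0)"
    by (intro sum.cong) (auto simp: lap_def)
  also have "\<dots> = (\<Sum>j\<in>{j \<in> ?V - {i}. adj p q1 q2 i j}. - v j)"
    using sum.inter_filter[of "?V - {i}" "\<lambda>j. - v j"] fin by simp
  also have "{j \<in> ?V - {i}. adj p q1 q2 i j} = ?N" by (auto simp: adj_iff)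
  also have "lap p q1 q2 i i = real (card ?N)" by (simp add: lap_def degree_def)
  finally show ?thesis by (simp add: sum_subtractf sum_negf)
qed

lemma junction_system_det:
  fixes t P Q1 Q2 a b c :: real
  assumes "t * c = a + b" "Q1 * a + P * c + b = 0" "Q2 * b + P * c + a = 0"
  shows "a * (t * (P * (2 - Q1 - Q2) - t * (Q1 * Q2 - 1))) = 0"
    and "b * (t * (P * (2 - Q1 - Q2) - t * (Q1 * Q2 - 1))) = 0"
proof -
  have "a * (t * (P * (2 - Q1 - Q2) - t * (Q1 * Q2 - 1)))
      = (P + t) * (t * (Q2 * b + P * c + a) + P * (a + b - t * c))
        - (Q2 * t + P) * (t * (Q1 * a + P * c + b) + P * (a + b - t * c))"
    by (simp add: algebra_simps)
  then show "a * (t * (P * (2 - Q1 - Q2) - t * (Q1 * Q2 - 1))) = 0" using assms by simp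
  have "b * (t * (P * (2 - Q1 - Q2) - t * (Q1 * Q2 - 1)))
      = (P + t) * (t * (Q1 * a + P * c + b) + P * (a + b - t * c))
        - (Q1 * t + P) * (t * (Q2 * b + P * c + a) + P * (a + b - t * c))"
    by (simp add: algebra_simps)
  then show "b * (t * (P * (2 - Q1 - Q2) - t * (Q1 * Q2 - 1))) = 0" using assms by simp
qed

(* (a, b) solves the first of the two equations left after eliminating c = (a + b) / t; the
   second then holds because the determinant vanishes. *)
lemma junction_system_solution:
  fixes t P Q1 Q2 :: real
  assumes "t \<noteq> 0" "P * (2 - Q1 - Q2) - t * (Q1 * Q2 - 1) = 0"
  defines "a \<equiv> P + t" and "b \<equiv> - (Q1 * t + P)"
  shows "t * ((a + b) / t) = a + b" "Q1 * a + P * ((a + b) / t) + b = 0"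
    and "Q2 * b + P * ((a + b) / t) + a = 0"
proof -
  show "t * ((a + b) / t) = a + b" using assms(1) by simp
  have "t * (Q1 * a + P * ((a + b) / t) + b) = 0"
    using assms(1) unfolding a_def b_def by (simp add: field_simps)
  then show "Q1 * a + P * ((a + b) / t) + b = 0" using assms(1) by simp
  have "t * (Q2 * b + P * ((a + b) / t) + a) = t * (P * (2 - Q1 - Q2) - t * (Q1 * Q2 - 1))"
    using assms(1) unfolding a_def b_def by (simp add: field_simps)
  then show "Q2 * b + P * ((a + b) / t) + a = 0" using assms by simp
qed

locale clique_tails =
  fixes p q1 q2 :: nat
  assumes p_ge: "3 \<le> p" and q1_ge: "2 \<le> q1" and q2_ge: "2 \<le> q2"
begin

abbreviation "V \<equiv> verts p q1 q2"
abbreviation "left_leaf \<equiv> - int q1 - int p + 2"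
(* the clique vertices not attached to a tail *)
abbreviation "I \<equiv> {- int p + 2 .. -1}"

definition left_tail_shaped :: "real \<Rightarrow> (int \<Rightarrow> real) \<Rightarrow> bool" where
  "left_tail_shaped lam v \<longleftrightarrow>
     (\<forall>j\<le>q1 - 1. v (left_leaf + int j) = v left_leaf * path_poly (2 - lam) j)"

definition right_tail_shaped :: "real \<Rightarrow> (int \<Rightarrow> real) \<Rightarrow> bool" where
  "right_tail_shaped lam v \<longleftrightarrow>
     (\<forall>j\<le>q2 - 1. v (int q2 - 1 - int j) = v (int q2 - 1) * path_poly (2 - lam) j)"

(* The eigen-equations at -p+1, 0 and -1 for a = v(-p+1), b = v 0 and v = c on I; the
   determinant of this linear system in (a, b, c) is Dfun q1 p q2 lam. *)
definition junction_system :: "real \<Rightarrow> real \<Rightarrow> real \<Rightarrow> real \<Rightarrow> bool" where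
  "junction_system lam a b c \<longleftrightarrow>
     (2 - lam) * c = a + b \<and>
     Qf p q1 lam * a + (real p - 2) * c + b = 0 \<and>
     Qf p q2 lam * b + (real p - 2) * c + a = 0"

lemma junction_system_trivial:
  assumes "junction_system lam a b c" "lam \<noteq> 2" "Dfun q1 p q2 lam \<noteq> 0"
  shows "a = 0 \<and> b = 0 \<and> c = 0"
proof -
  have eqs: "(2 - lam) * c = a + b" "Qf p q1 lam * a + (real p - 2) * c + b = 0"
      "Qf p q2 lam * b + (real p - 2) * c + a = 0"
    using assms(1) unfolding junction_system_def by simp_all
  have "(2 - lam) * Dfun q1 p q2 lam \<noteq> 0" using assms(2,3) by simp
  then have "a = 0" "b = 0" using junction_system_det[OF eqs] unfolding Dfun_def by simp_all
  then show ?thesis using eqs(1) assms(2) by simp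
qed

lemma junction_system_nontrivial:
  assumes "lam \<noteq> 2" "Dfun q1 p q2 lam = 0"
  defines "a \<equiv> real p - 2 + (2 - lam)" and "b \<equiv> - (Qf p q1 lam * (2 - lam) + (real p - 2))"
  shows "junction_system lam a b ((a + b) / (2 - lam))"
  using assms(2) unfolding junction_system_def Dfun_def a_def b_def
  by (intro conjI junction_system_solution) (use assms(1) in simp_all)

lemma junction_system_equal_tails:
  assumes "q1 = q2" "junction_system lam a b c"
  shows "FA p q1 lam * (a - b) = 0" "FS p q1 lam * (a + b) = 0"
proof -
  have eqs: "(2 - lam) * c = a + b" "Qf p q1 lam * a + (real p - 2) * c + b = 0"
      "Qf p q1 lam * b + (real p - 2) * c + a = 0"
    using assms unfolding junction_system_def by simp_all
  show "FA p q1 lam * (a - b) = 0"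
    using eqs(2,3) unfolding FA_def by (simp add: algebra_simps)
  have "FS p q1 lam * (a + b)
      = (2 - lam) * (Qf p q1 lam * a + (real p - 2) * c + b + (Qf p q1 lam * b + (real p - 2) * c + a))
        - 2 * (real p - 2) * ((2 - lam) * c - (a + b))"
    unfolding FS_def by (simp add: algebra_simps)
  then show "FS p q1 lam * (a + b) = 0" using eqs by simp
qed

lemma lap_apply_left_end: "lap_apply p q1 q2 v left_leaf = v left_leaf - v (left_leaf + 1)"
proof -
  have "left_leaf \<in> V" using p_ge q2_ge by (simp add: verts_def)
  moreover have "{j \<in> V. adj p q1 q2 left_leaf j} = {left_leaf + 1}"
    using p_ge q1_ge q2_ge by (auto simp: adj_iff verts_def)
  ultimately show ?thesis using lap_apply_eq_neighbour_sum by simp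
qed

lemma lap_apply_left_path:
  assumes "left_leaf < i" "i \<le> - int p"
  shows "lap_apply p q1 q2 v i = 2 * v i - v (i - 1) - v (i + 1)"
proof -
  have "i \<in> V" using assms q2_ge by (simp add: verts_def)
  moreover have "{j \<in> V. adj p q1 q2 i j} = {i - 1, i + 1}"
    using assms p_ge q1_ge q2_ge by (auto simp: adj_iff verts_def)
  ultimately show ?thesis using lap_apply_eq_neighbour_sum by simp
qed

lemma lap_apply_left_junction:
  assumes "\<forall>j\<in>I. v j = c"
  shows "lap_apply p q1 q2 v (- int p + 1)
    = (v (- int p + 1) - v (- int p)) + (real p - 2) * (v (- int p + 1) - c) + (v (- int p + 1) - v 0)"
proof -
  have "- int p + 1 \<in> V" using q1_ge q2_ge by (simp add: verts_def)
  moreover have "{j \<in> V. adj p q1 q2 (- int p + 1) j} = insert (- int p) (insert 0 I)"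
    using p_ge q1_ge q2_ge by (auto simp: adj_iff verts_def)
  moreover have "(\<Sum>j\<in>I. v (- int p + 1) - v j) = (real p - 2) * (v (- int p + 1) - c)"
    using assms p_ge by (simp add: of_nat_diff)
  ultimately show ?thesis
    using lap_apply_eq_neighbour_sum p_ge by simp
qed

lemma lap_apply_interior:
  assumes "\<forall>j\<in>I. v j = c" "i \<in> I"
  shows "lap_apply p q1 q2 v i = 2 * c - v (- int p + 1) - v 0"
proof -
  have "i \<in> V" using assms(2) q1_ge q2_ge by (simp add: verts_def)
  moreover have "{j \<in> V. adj p q1 q2 i j} = insert (- int p + 1) (insert 0 (I - {i}))"
    using assms(2) p_ge q1_ge q2_ge by (auto simp: adj_iff verts_def)
  moreover have "(\<Sum>j\<in>I - {i}. v i - v j) = 0" using assms by (intro sum.neutral) auto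
  ultimately show ?thesis
    using lap_apply_eq_neighbour_sum assms by (simp add: sum.insert_remove)
qed

lemma left_tail_vertex_eigen_iff:
  assumes "j + 1 \<le> q1 - 1"
  shows "lap_apply p q1 q2 v (left_leaf + int j) = lam * v (left_leaf + int j) \<longleftrightarrow>
    v (left_leaf + int (j + 1)) = (2 - lam) * v (left_leaf + int j) - v (left_leaf + int (j - 1))"
proof (cases j)
  case 0
  have "lap_apply p q1 q2 v left_leaf = v left_leaf - v (left_leaf + 1)" by (rule lap_apply_left_end)
  then show ?thesis unfolding 0 by (simp add: algebra_simps) linarith
next
  case (Suc k)
  have "left_leaf < left_leaf + int j" "left_leaf + int j \<le> - int p" using assms Suc by simp_all
  then have "lap_apply p q1 q2 v (left_leaf + int j)
      = 2 * v (left_leaf + int j) - v (left_leaf + int j - 1) - v (left_leaf + int j + 1)"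
    by (rule lap_apply_left_path)
  moreover have "left_leaf + int (j - 1) = left_leaf + int j - 1" using Suc by simp
  ultimately show ?thesis by (simp add: algebra_simps) linarith
qed

lemma left_tail_eigen_iff:
  "(\<forall>i\<in>{left_leaf .. - int p}. lap_apply p q1 q2 v i = lam * v i) \<longleftrightarrow> left_tail_shaped lam v"
proof -
  have "{left_leaf .. - int p} = (\<lambda>j. left_leaf + int j) ` {j. j + 1 \<le> q1 - 1}"
  proof (intro equalityI subsetI)
    fix i assume "i \<in> {left_leaf .. - int p}"
    then show "i \<in> (\<lambda>j. left_leaf + int j) ` {j. j + 1 \<le> q1 - 1}"
      by (intro image_eqI[of _ _ "nat (i - left_leaf)"]) auto
  qed auto
  then have "(\<forall>i\<in>{left_leaf .. - int p}. lap_apply p q1 q2 v i = lam * v i) \<longleftrightarrow>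
      (\<forall>j. j + 1 \<le> q1 - 1 \<longrightarrow> v (left_leaf + int (j + 1))
        = (2 - lam) * v (left_leaf + int j) - v (left_leaf + int (j - 1)))"
    using left_tail_vertex_eigen_iff by auto
  also have "\<dots> \<longleftrightarrow> left_tail_shaped lam v"
    unfolding left_tail_shaped_def
    using path_recurrence_iff[where m = "q1 - 1" and f = "\<lambda>j. v (left_leaf + int j)"] by simp
  finally show ?thesis .
qed

lemma left_junction_eigen_iff:
  assumes lam: "4 < lam" and const: "\<forall>j\<in>I. v j = c"
    and tail: "left_tail_shaped lam v"
  shows "lap_apply p q1 q2 v (- int p + 1) = lam * v (- int p + 1)
    \<longleftrightarrow> Qf p q1 lam * v (- int p + 1) + (real p - 2) * c + v 0 = 0"
proof -
  define r where "r = path_ratio (2 - lam) (q1 - 1)"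
  have "v (- int p) = v left_leaf * path_poly (2 - lam) (q1 - 2)"
    using tail[unfolded left_tail_shaped_def, rule_format, of "q1 - 2"] q1_ge by (simp add: of_nat_diff)
  moreover have "v (- int p + 1) = v left_leaf * path_poly (2 - lam) (q1 - 1)"
    using tail[unfolded left_tail_shaped_def, rule_format, of "q1 - 1"] q1_ge by (simp add: of_nat_diff)
  moreover have "path_poly (2 - lam) (q1 - 2) = r * path_poly (2 - lam) (q1 - 1)"
    using path_poly_eq_ratio[of "2 - lam" "q1 - 2"] lam q1_ge unfolding r_def
    by (simp add: Suc_diff_Suc numeral_2_eq_2)
  ultimately have left: "v (- int p) = r * v (- int p + 1)" by simp
  have Q: "Qf p q1 lam = r + lam - real p" unfolding r_def using Qf_eq_path_ratio lam q1_ge by simp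
  show ?thesis unfolding lap_apply_left_junction[OF const] left Q by (simp add: algebra_simps) linarith
qed

lemma right_tail_eigen_iff:
  "(\<forall>i\<in>{1 .. int q2 - 1}. lap_apply p q1 q2 v i = lam * v i) \<longleftrightarrow> right_tail_shaped lam v"
proof -
  interpret mirrored: clique_tails p q2 q1 using p_ge q1_ge q2_ge by unfold_locales
  have "mirror p = (-) (- int p + 1)" by (simp add: mirror_def fun_eq_iff)
  then have img: "mirror p ` {1 .. int q2 - 1} = {- int q2 - int p + 2 .. - int p}" by simp
  have "(\<forall>i\<in>{1 .. int q2 - 1}. lap_apply p q1 q2 v i = lam * v i) \<longleftrightarrow>
      (\<forall>i\<in>mirror p ` {1 .. int q2 - 1}.
        lap_apply p q2 q1 (\<lambda>k. v (mirror p k)) i = lam * v (mirror p i))"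
    by (simp add: lap_apply_mirror)
  also have "\<dots> \<longleftrightarrow> mirrored.left_tail_shaped lam (\<lambda>k. v (mirror p k))"
    unfolding img by (rule mirrored.left_tail_eigen_iff)
  finally show ?thesis
    unfolding mirrored.left_tail_shaped_def right_tail_shaped_def by (simp add: mirror_def algebra_simps)
qed

lemma right_junction_eigen_iff:
  assumes lam: "4 < lam" and const: "\<forall>j\<in>I. v j = c"
    and tail: "right_tail_shaped lam v"
  shows "lap_apply p q1 q2 v 0 = lam * v 0
    \<longleftrightarrow> Qf p q2 lam * v 0 + (real p - 2) * c + v (- int p + 1) = 0"
proof -
  interpret mirrored: clique_tails p q2 q1 using p_ge q1_ge q2_ge by unfold_locales
  have "\<forall>j\<in>I. v (mirror p j) = c" using const by (auto simp: mirror_def)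
  moreover have "mirrored.left_tail_shaped lam (\<lambda>k. v (mirror p k))"
    using tail unfolding mirrored.left_tail_shaped_def right_tail_shaped_def
    by (simp add: mirror_def algebra_simps)
  ultimately have "lap_apply p q2 q1 (\<lambda>k. v (mirror p k)) (- int p + 1) = lam * v (mirror p (- int p + 1))
      \<longleftrightarrow> Qf p q2 lam * v (mirror p (- int p + 1)) + (real p - 2) * c + v (mirror p 0) = 0"
    by (rule mirrored.left_junction_eigen_iff[OF lam])
  moreover have "mirror p 0 = - int p + 1" "mirror p (- int p + 1) = 0" by (simp_all add: mirror_def)
  ultimately show ?thesis using lap_apply_mirror[of p q2 q1 v 0] by simp
qed

lemma interior_eigen_iff:
  assumes "\<forall>j\<in>I. v j = c"
  shows "(\<forall>i\<in>I. lap_apply p q1 q2 v i = lam * v i) \<longleftrightarrow> (2 - lam) * c = v (- int p + 1) + v 0"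
proof
  assume "\<forall>i\<in>I. lap_apply p q1 q2 v i = lam * v i"
  moreover have "-1 \<in> I" using p_ge by simp
  ultimately have "2 * c - v (- int p + 1) - v 0 = lam * c"
    using lap_apply_interior[OF assms] assms by metis
  then show "(2 - lam) * c = v (- int p + 1) + v 0" by (simp add: algebra_simps)
next
  assume "(2 - lam) * c = v (- int p + 1) + v 0"
  then show "\<forall>i\<in>I. lap_apply p q1 q2 v i = lam * v i"
    using lap_apply_interior[OF assms] assms by (simp add: algebra_simps)
qed

lemma eigen_equation_iff:
  assumes lam: "4 < lam" and const: "\<forall>j\<in>I. v j = c"
  shows "(\<forall>i\<in>V. lap_apply p q1 q2 v i = lam * v i) \<longleftrightarrow>
      left_tail_shaped lam v \<and> right_tail_shaped lam v \<and> junction_system lam (v (- int p + 1)) (v 0) c"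
proof -
  have "V = {left_leaf .. - int p} \<union> insert (- int p + 1) (I \<union> insert 0 {1 .. int q2 - 1})"
    using p_ge q1_ge q2_ge by (auto simp: verts_def)
  then have "(\<forall>i\<in>V. lap_apply p q1 q2 v i = lam * v i) \<longleftrightarrow>
      (\<forall>i\<in>{left_leaf .. - int p}. lap_apply p q1 q2 v i = lam * v i) \<and>
      lap_apply p q1 q2 v (- int p + 1) = lam * v (- int p + 1) \<and>
      (\<forall>i\<in>I. lap_apply p q1 q2 v i = lam * v i) \<and>
      lap_apply p q1 q2 v 0 = lam * v 0 \<and>
      (\<forall>i\<in>{1 .. int q2 - 1}. lap_apply p q1 q2 v i = lam * v i)"
    by auto
  then show ?thesis
    using left_tail_eigen_iff right_tail_eigen_iff interior_eigen_iff[OF const]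
      left_junction_eigen_iff[OF lam const] right_junction_eigen_iff[OF lam const]
    unfolding junction_system_def by blast
qed

lemma EK_perp_imp_const:
  assumes "v \<in> EK_perp p q1 q2" "i \<in> I" "j \<in> I"
  shows "v i = v j"
proof -
  define w where "w k = (if k = i then 1 else 0) - (if k = j then 1 else 0 :: real)" for k
  have IV: "I \<subseteq> V" by (auto simp: verts_def)
  have "w \<in> EK p q1 q2"
    using assms(2,3) IV unfolding EK_def is_vec_def w_def by (auto simp: sum_subtractf)
  then have "vinner p q1 q2 v w = 0" using assms(1) unfolding EK_perp_def by blast
  moreover have "vinner p q1 q2 v w = v i - v j"
    unfolding vinner_def w_def using assms(2,3) IV
    by (simp add: right_diff_distrib sum_subtractf subset_iff if_distrib[of "(*) _"] sum.If_cases
        verts_def)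
  ultimately show ?thesis by simp
qed

lemma const_imp_EK_perp:
  assumes "is_vec p q1 q2 v" "\<forall>k\<in>I. v k = c"
  shows "v \<in> EK_perp p q1 q2"
  unfolding EK_perp_def
proof (intro CollectI conjI ballI assms(1))
  fix w assume w: "w \<in> EK p q1 q2"
  have "vinner p q1 q2 v w = (\<Sum>k\<in>I. v k * w k)"
    unfolding vinner_def using w
    by (intro sum.mono_neutral_right) (auto simp: EK_def verts_def)
  also have "\<dots> = c * (\<Sum>k\<in>I. w k)" using assms(2) by (simp add: sum_distrib_left)
  also have "\<dots> = 0" using w by (simp add: EK_def)
  finally show "vinner p q1 q2 v w = 0" .
qed

definition tail_extension :: "real \<Rightarrow> real \<Rightarrow> real \<Rightarrow> real \<Rightarrow> int \<Rightarrow> real" where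
  "tail_extension lam a b c i =
     (if i \<in> V then
        if i \<le> - int p + 1
        then a * path_poly (2 - lam) (nat (i - left_leaf)) / path_poly (2 - lam) (q1 - 1)
        else if 0 \<le> i
        then b * path_poly (2 - lam) (nat (int q2 - 1 - i)) / path_poly (2 - lam) (q2 - 1)
        else c
      else 0)"

lemma tail_extension_props:
  fixes a b c :: real
  assumes "4 < lam"
  defines "w \<equiv> tail_extension lam a b c"
  shows "is_vec p q1 q2 w" "\<forall>j\<in>I. w j = c" "w (- int p + 1) = a" "w 0 = b"
    and "left_tail_shaped lam w" "right_tail_shaped lam w"
proof -
  have nz: "path_poly (2 - lam) n \<noteq> 0" for n using path_poly_nonzero assms(1) by simp
  show "is_vec p q1 q2 w" "\<forall>j\<in>I. w j = c"
    unfolding is_vec_def w_def tail_extension_def by (auto simp: verts_def)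
  show "w (- int p + 1) = a" "w 0 = b"
    unfolding w_def tail_extension_def using nz p_ge q1_ge q2_ge
    by (simp_all add: verts_def nat_diff_distrib)
  show "left_tail_shaped lam w" "right_tail_shaped lam w"
    unfolding left_tail_shaped_def right_tail_shaped_def w_def tail_extension_def
    using p_ge q1_ge q2_ge by (auto simp: verts_def)
qed

lemma vertex_cases:
  assumes "i \<in> V"
  obtains (left) j where "j \<le> q1 - 1" "i = left_leaf + int j"
    | (inner) "i \<in> I"
    | (right) j where "j \<le> q2 - 1" "i = int q2 - 1 - int j"
proof -
  have i: "left_leaf \<le> i" "i \<le> int q2 - 1" using assms by (auto simp: verts_def)
  consider "i \<le> - int p + 1" | "i \<in> I" | "0 \<le> i" by fastforce
  then show ?thesis
  proof cases
    case 1
    then have "nat (i - left_leaf) \<le> q1 - 1" "i = left_leaf + int (nat (i - left_leaf))"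
      using i q1_ge by auto
    then show ?thesis by (rule left)
  next
    case 3
    then have "nat (int q2 - 1 - i) \<le> q2 - 1" "i = int q2 - 1 - int (nat (int q2 - 1 - i))"
      using i q2_ge by auto
    then show ?thesis by (rule right)
  qed (rule inner)
qed

lemma eq_tail_extension:
  assumes lam: "4 < lam" and vec: "is_vec p q1 q2 v" and const: "\<forall>j\<in>I. v j = c"
    and tail_l: "left_tail_shaped lam v" and tail_r: "right_tail_shaped lam v"
  shows "v = tail_extension lam (v (- int p + 1)) (v 0) c"
proof
  fix i
  have nz: "path_poly (2 - lam) n \<noteq> 0" for n using path_poly_nonzero lam by simp
  have a: "v (- int p + 1) = v left_leaf * path_poly (2 - lam) (q1 - 1)"
    using tail_l[unfolded left_tail_shaped_def, rule_format, of "q1 - 1"] q1_ge by (simp add: of_nat_diff)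
  have b: "v 0 = v (int q2 - 1) * path_poly (2 - lam) (q2 - 1)"
    using tail_r[unfolded right_tail_shaped_def, rule_format, of "q2 - 1"] q2_ge by (simp add: of_nat_diff)
  show "v i = tail_extension lam (v (- int p + 1)) (v 0) c i"
  proof (cases "i \<in> V")
    case False
    then show ?thesis using vec unfolding is_vec_def tail_extension_def by simp
  next
    case True
    then show ?thesis
    proof (cases rule: vertex_cases)
      case (left j)
      then have "int j + 1 \<le> int q1" using q1_ge by arith
      then show ?thesis
        using True left tail_l a nz unfolding tail_extension_def left_tail_shaped_def by auto
    next
      case inner
      then show ?thesis using True const unfolding tail_extension_def by auto
    next
      case (right j)
      then have "int j + 1 \<le> int q2" using q2_ge by arith
      then show ?thesis
        using True right tail_r b nz p_ge unfolding tail_extension_def right_tail_shaped_def by auto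
    qed
  qed
qed

lemma eigvec_EKperp_junctions:
  assumes lam: "4 < lam" and ev: "eigvec_EKperp p q1 q2 lam v"
  obtains c where "\<forall>j\<in>I. v j = c" "left_tail_shaped lam v" "right_tail_shaped lam v"
    "junction_system lam (v (- int p + 1)) (v 0) c"
proof -
  have "v \<in> EK_perp p q1 q2" "-1 \<in> I" using ev p_ge unfolding eigvec_EKperp_def by simp_all
  then have const: "\<forall>j\<in>I. v j = v (-1)" using EK_perp_imp_const by blast
  moreover have "\<forall>i\<in>V. lap_apply p q1 q2 v i = lam * v i" using ev unfolding eigvec_EKperp_def by blast
  ultimately show ?thesis using that unfolding eigen_equation_iff[OF lam const] by blast
qed

lemma eigvec_imp_Dfun_zero:
  assumes lam: "4 < lam" and ev: "eigvec_EKperp p q1 q2 lam v"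
  shows "Dfun q1 p q2 lam = 0"
proof (rule ccontr)
  assume D: "Dfun q1 p q2 lam \<noteq> 0"
  obtain c where const: "\<forall>j\<in>I. v j = c"
    and tails: "left_tail_shaped lam v" "right_tail_shaped lam v"
    and junctions: "junction_system lam (v (- int p + 1)) (v 0) c"
    using eigvec_EKperp_junctions[OF lam ev] by blast
  have "v (- int p + 1) = 0" "v 0 = 0" "c = 0"
    using junction_system_trivial[OF junctions _ D] lam by simp_all
  moreover have "v = tail_extension lam (v (- int p + 1)) (v 0) c"
    using ev unfolding eigvec_EKperp_def by (intro eq_tail_extension[OF lam _ const tails]) blast
  ultimately have "v = tail_extension lam 0 0 0" by simp
  also have "\<dots> = (\<lambda>_. 0)" by (simp add: tail_extension_def fun_eq_iff)
  finally show False using ev unfolding eigvec_EKperp_def by blast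
qed

lemma Dfun_zero_imp_eigvec:
  assumes lam: "4 < lam" "lam \<noteq> real p" and D: "Dfun q1 p q2 lam = 0"
  shows "\<exists>v. eigvec_EKperp p q1 q2 lam v"
proof -
  define a where "a = real p - 2 + (2 - lam)"
  define b where "b = - (Qf p q1 lam * (2 - lam) + (real p - 2))"
  define c where "c = (a + b) / (2 - lam)"
  define v where "v = tail_extension lam a b c"
  have "junction_system lam a b c"
    unfolding a_def b_def c_def using junction_system_nontrivial D lam(1) by simp
  moreover note props = tail_extension_props[OF lam(1), of a b c, folded v_def]
  ultimately have "\<forall>i\<in>V. lap_apply p q1 q2 v i = lam * v i"
    unfolding eigen_equation_iff[OF lam(1) props(2)] by simp
  moreover have "v (- int p + 1) \<noteq> 0" using props(3) lam unfolding a_def by simp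
  then have "v \<noteq> (\<lambda>_. 0)" by auto
  moreover have "v \<in> EK_perp p q1 q2" using const_imp_EK_perp props(1,2) by blast
  ultimately show ?thesis using props(1) unfolding eigvec_EKperp_def by blast
qed

lemma tails_mirror_scale:
  assumes q: "q1 = q2" and lam: "4 < lam"
    and tail_l: "left_tail_shaped lam v" and tail_r: "right_tail_shaped lam v"
    and scale: "v (- int p + 1) = s * v 0"
    and n: "n \<in> {0 .. int q1 - 1}"
  shows "v (- int p + 1 - n) = s * v n"
proof -
  have nz: "path_poly (2 - lam) (q1 - 1) \<noteq> 0" using path_poly_nonzero lam by simp
  have "v (- int p + 1) = v left_leaf * path_poly (2 - lam) (q1 - 1)"
    using tail_l[unfolded left_tail_shaped_def, rule_format, of "q1 - 1"] q1_ge by (simp add: of_nat_diff)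
  moreover have "v 0 = v (int q2 - 1) * path_poly (2 - lam) (q1 - 1)"
    using tail_r[unfolded right_tail_shaped_def, rule_format, of "q2 - 1"] q q2_ge by (simp add: of_nat_diff)
  ultimately have ends: "v left_leaf = s * v (int q2 - 1)" using scale nz by simp
  define j where "j = q1 - 1 - nat n"
  have j: "j \<le> q1 - 1" "j \<le> q2 - 1" using q unfolding j_def by auto
  have idx: "- int p + 1 - n = left_leaf + int j" "n = int q2 - 1 - int j"
    using n q q1_ge unfolding j_def by auto
  have "v (- int p + 1 - n) = v left_leaf * path_poly (2 - lam) j"
    unfolding idx(1) using tail_l j(1) unfolding left_tail_shaped_def by blast
  moreover have "v n = v (int q2 - 1) * path_poly (2 - lam) j"
    by (subst idx(2)) (use tail_r j(2) in \<open>auto simp: right_tail_shaped_def\<close>)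
  ultimately show ?thesis using ends by simp
qed

lemma eigvec_symmetric:
  assumes "q1 = q2" "4 < lam" "FS p q1 lam = 0" "eigvec_EKperp p q1 q2 lam v"
  shows "symmetric_vec p q1 v"
proof -
  obtain c where "\<forall>j\<in>I. v j = c"
    and tails: "left_tail_shaped lam v" "right_tail_shaped lam v"
    and junctions: "junction_system lam (v (- int p + 1)) (v 0) c"
    using eigvec_EKperp_junctions[OF assms(2,4)] by blast
  moreover have "FA p q1 lam \<noteq> 0" using FS_nonzero_if_FA_zero assms(2,3) q1_ge by blast
  ultimately have "v (- int p + 1) = 1 * v 0"
    using junction_system_equal_tails(1)[OF assms(1) junctions] by simp
  from tails_mirror_scale[OF assms(1,2) tails this] show ?thesis
    unfolding symmetric_vec_def by simp
qed

lemma eigvec_antisymmetric: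
  assumes "q1 = q2" "4 < lam" "FA p q1 lam = 0" "eigvec_EKperp p q1 q2 lam v"
  shows "antisymmetric_vec p q1 v"
proof -
  obtain c where "\<forall>j\<in>I. v j = c"
    and tails: "left_tail_shaped lam v" "right_tail_shaped lam v"
    and junctions: "junction_system lam (v (- int p + 1)) (v 0) c"
    using eigvec_EKperp_junctions[OF assms(2,4)] by blast
  moreover have "FS p q1 lam \<noteq> 0" using FS_nonzero_if_FA_zero assms(2,3) q1_ge by blast
  ultimately have "v (- int p + 1) = -1 * v 0"
    using junction_system_equal_tails(2)[OF assms(1) junctions] by (simp add: eq_neg_iff_add_eq_0)
  from tails_mirror_scale[OF assms(1,2) tails this] show ?thesis
    unfolding antisymmetric_vec_def by simp
qed

lemma eigvec_EKperp_iff_Dfun_zero: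
  assumes "4 < lam"
  shows "(\<exists>v. eigvec_EKperp p q1 q2 lam v) \<longleftrightarrow> Dfun q1 p q2 lam = 0"
proof
  assume D: "Dfun q1 p q2 lam = 0"
  have "lam \<noteq> real p"
    using Dfun_pos_outside[OF q1_ge q2_ge, of p lam] p_ge assms D by auto
  then show "\<exists>v. eigvec_EKperp p q1 q2 lam v" using Dfun_zero_imp_eigvec[OF assms _ D] by blast
qed (use eigvec_imp_Dfun_zero assms in blast)

end

theorem proposition14:
  fixes p q1 q2 :: nat
  assumes "p \<ge> 6" and "q1 \<ge> 3" and "q2 \<ge> 3"
  shows "(\<forall>lam::real. lam > 4 \<longrightarrow>
            ((\<exists>v. eigvec_EKperp p q1 q2 lam v) \<longleftrightarrow> Dfun q1 p q2 lam = 0))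
       \<and> card {lam::real. real p < lam \<and> lam \<le> real p + 2 \<and> Dfun q1 p q2 lam = 0} = 2
       \<and> (\<forall>lam::real. (4 < lam \<and> lam \<le> real p) \<or> real p + 2 < lam \<longrightarrow> Dfun q1 p q2 lam \<noteq> 0)
       \<and> (q1 = q2 \<longrightarrow>
            (\<forall>lam::real. lam > 4 \<longrightarrow> Dfun q1 p q1 lam = FA p q1 lam * FS p q1 lam)
          \<and> (\<forall>lam::real. \<forall>v. lam > 4 \<and> FS p q1 lam = 0 \<and> eigvec_EKperp p q1 q1 lam v
                \<longrightarrow> symmetric_vec p q1 v)
          \<and> (\<forall>lam::real. \<forall>v. lam > 4 \<and> FA p q1 lam = 0 \<and> eigvec_EKperp p q1 q1 lam v
                \<longrightarrow> antisymmetric_vec p q1 v)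
          \<and> (\<exists>!lam::real. real p < lam \<and> lam < real p + 2 \<and> FA p q1 lam = 0)
          \<and> (\<forall>lam::real. (4 < lam \<and> lam \<le> real p) \<or> real p + 2 \<le> lam \<longrightarrow> FA p q1 lam \<noteq> 0)
          \<and> (\<exists>!lam::real. real p < lam \<and> lam < real p + 2 \<and> FS p q1 lam = 0)
          \<and> (\<forall>lam::real. (4 < lam \<and> lam \<le> real p) \<or> real p + 2 \<le> lam \<longrightarrow> FS p q1 lam \<noteq> 0))"
proof -
  interpret clique_tails p q1 q2 using assms by unfold_locales auto
  have q: "2 \<le> q1" "2 \<le> q2" and p: "4 < p" "3 < p" "2 < p" "2 \<le> p" using assms by auto
  show ?thesis
  proof (intro conjI allI impI)
    fix lam :: real and v assume "q1 = q2" "4 < lam \<and> FS p q1 lam = 0 \<and> eigvec_EKperp p q1 q1 lam v"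
    then show "symmetric_vec p q1 v" using eigvec_symmetric by auto
  next
    fix lam :: real and v assume "q1 = q2" "4 < lam \<and> FA p q1 lam = 0 \<and> eigvec_EKperp p q1 q1 lam v"
    then show "antisymmetric_vec p q1 v" using eigvec_antisymmetric by auto
  next
    fix lam :: real assume "4 < lam \<and> lam \<le> real p \<or> real p + 2 < lam"
    then show "Dfun q1 p q2 lam \<noteq> 0" using Dfun_pos_outside[OF q p(4)] by fastforce
  qed (simp_all add: eigvec_EKperp_iff_Dfun_zero card_Dfun_zeros[OF q p(1)] Dfun_eq_FA_mult_FS
      FA_unique_zero FA_nonzero_outside FS_unique_zero FS_nonzero_outside q p)
qed

end
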